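(* Let $f$ be a nonzero polynomial and write its multiset of reproducible zeros as $$R(f)=\{\underbrace{\beta_1,\dots,\beta_1}_{r_1},\underbrace{\beta_2,\dots,\beta_2}_{r_2},\dots,\underbrace{\beta_n,\dots,\beta_n}_{r_n}\}$$ with $\beta_1,\dots,\beta_n$ distinct. Then $$[f]=\Big[\prod_{\beta\in R(f)}(z-\beta)\Big]=\Big(\operatorname{span}\big\{k_{\beta_j}^{(\ell)}:0\le\ell\le r_j-1,\ 1\le j\le n\big\}\Big)^{\perp},$$ where the product is taken over $R(f)$ with multiplicity (and equals $1$ if $R(f)$ is empty).
   Context: Standing assumptions: $\Omega\subset\mathbb C$ is a domain with $0\in\Omega$, $\mathcal H$ is a Hilbert space of analytic functions on $\Omega$ with bounded point evaluations at points of $\Omega$, the shift $(Sf)(z)=zf(z)$ is bounded on $\mathcal H$, and the polynomials $\mathcal P$ are dense in $\mathcal H$. For $g\in\mathcal H$, $[g]$ is the closure in $\mathcal H$ of $\operatorname{span}\{z^kg:k\ge0\}$. A point $\beta\in\mathbb C$ is reproducible of order $m\ge0$ if $p\mapsto p^{(m)}(\beta)$ on $\mathcal P$ extends to a bounded linear functional on $\mathcal H$; $k_\beta^{(m)}\in\mathcal H$ is the element representing this extension, $\langle g,k_\beta^{(m)}\rangle=g^{(m)}(\beta)$. $\beta$ is a reproducible point if reproducible of order $0$; reproducibility of order $m$ implies that of all orders $j\le m$; $\operatorname{ro}(\beta)\in\{0,1,\dots\}\cup\{\infty\}$ is the supremum of orders of reproducibility. For a nonzero polynomial $p$, $R(p)$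 is the multiset of reproducible zeros: each reproducible point $\beta$ at which $p$ has a zero of order $m\ge1$ is listed $\min\{m,\operatorname{ro}(\beta)+1\}$ times; non-reproducible zeros are omitted. *)

theory Defs
  imports "HOL-Analysis.Analysis" "HOL-Computational_Algebra.Polynomial"
          "HOL-Library.Multiset" "HOL-Library.Extended_Nat"
begin

text \<open>Elements of the Hilbert space are functions complex => complex that are
  holomorphic on Omega and vanish outside Omega (so that each analytic function on
  Omega has a unique representative).\<close>

definition restr :: "complex set \<Rightarrow> (complex \<Rightarrow> complex) \<Rightarrow> complex \<Rightarrow> complex" where
  "restr \<Omega> g = (\<lambda>z. if z \<in> \<Omega> then g z else 0)"

definition hnorm :: "((complex \<Rightarrow> complex) \<Rightarrow> (complex \<Rightarrow> complex) \<Rightarrow> complex)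
    \<Rightarrow> (complex \<Rightarrow> complex) \<Rightarrow> real" where
  "hnorm ip g = sqrt (Re (ip g g))"

definition hdist :: "((complex \<Rightarrow> complex) \<Rightarrow> (complex \<Rightarrow> complex) \<Rightarrow> complex)
    \<Rightarrow> (complex \<Rightarrow> complex) \<Rightarrow> (complex \<Rightarrow> complex) \<Rightarrow> real" where
  "hdist ip g h = hnorm ip (\<lambda>z. g z - h z)"

definition AHS :: "complex set \<Rightarrow> (complex \<Rightarrow> complex) set
    \<Rightarrow> ((complex \<Rightarrow> complex) \<Rightarrow> (complex \<Rightarrow> complex) \<Rightarrow> complex) \<Rightarrow> bool" where
  "AHS \<Omega> H ip \<longleftrightarrow>
     open \<Omega> \<and> connected \<Omega> \<and> 0 \<in> \<Omega> \<and>
     (\<forall>g\<in>H. g holomorphic_on \<Omega> \<and> (\<forall>z. z \<notin> \<Omega> \<longrightarrow> g z = 0)) \<and>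
     (\<lambda>z. 0) \<in> H \<and>
     (\<forall>g\<in>H. \<forall>h\<in>H. (\<lambda>z. g z + h z) \<in> H) \<and>
     (\<forall>g\<in>H. \<forall>c. (\<lambda>z. c * g z) \<in> H) \<and>
     (\<forall>g\<in>H. \<forall>h\<in>H. \<forall>k\<in>H. ip (\<lambda>z. g z + h z) k = ip g k + ip h k) \<and>
     (\<forall>g\<in>H. \<forall>k\<in>H. \<forall>c. ip (\<lambda>z. c * g z) k = c * ip g k) \<and>
     (\<forall>g\<in>H. \<forall>k\<in>H. ip k g = cnj (ip g k)) \<and>
     (\<forall>g\<in>H. 0 \<le> Re (ip g g)) \<and>
     (\<forall>g\<in>H. ip g g = 0 \<longrightarrow> g = (\<lambda>z. 0)) \<and>
     \<comment> \<open>completeness\<close>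
     (\<forall>s. (\<forall>n. s n \<in> H) \<longrightarrow>
          (\<forall>e>0. \<exists>N. \<forall>m\<ge>N. \<forall>n\<ge>N. hdist ip (s m) (s n) < e) \<longrightarrow>
          (\<exists>g\<in>H. (\<lambda>n. hdist ip (s n) g) \<longlonglongrightarrow> 0)) \<and>
     \<comment> \<open>bounded point evaluations at points of Omega\<close>
     (\<forall>w\<in>\<Omega>. \<exists>C. \<forall>g\<in>H. cmod (g w) \<le> C * hnorm ip g) \<and>
     \<comment> \<open>bounded shift\<close>
     (\<forall>g\<in>H. (\<lambda>z. z * g z) \<in> H) \<and>
     (\<exists>C. \<forall>g\<in>H. hnorm ip (\<lambda>z. z * g z) \<le> C * hnorm ip g) \<and>
     \<comment> \<open>polynomials belong to H and are dense\<close>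
     (\<forall>p. restr \<Omega> (poly p) \<in> H) \<and>
     (\<forall>g\<in>H. \<forall>e>0. \<exists>p. hdist ip g (restr \<Omega> (poly p)) < e)"

definition hclosure :: "(complex \<Rightarrow> complex) set
    \<Rightarrow> ((complex \<Rightarrow> complex) \<Rightarrow> (complex \<Rightarrow> complex) \<Rightarrow> complex)
    \<Rightarrow> (complex \<Rightarrow> complex) set \<Rightarrow> (complex \<Rightarrow> complex) set" where
  "hclosure H ip A = {g \<in> H. \<forall>e>0. \<exists>h\<in>A. hdist ip g h < e}"

definition fspan :: "(complex \<Rightarrow> complex) set \<Rightarrow> (complex \<Rightarrow> complex) set" where
  "fspan A = {h. \<exists>(n::nat) (c::nat \<Rightarrow> complex) g. (\<forall>i<n. g i \<in> A) \<and>
                  h = (\<lambda>z. \<Sum>i<n. c i * g i z)}"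

definition perp :: "(complex \<Rightarrow> complex) set
    \<Rightarrow> ((complex \<Rightarrow> complex) \<Rightarrow> (complex \<Rightarrow> complex) \<Rightarrow> complex)
    \<Rightarrow> (complex \<Rightarrow> complex) set \<Rightarrow> (complex \<Rightarrow> complex) set" where
  "perp H ip A = {g \<in> H. \<forall>k\<in>A. ip g k = 0}"

definition cyc :: "(complex \<Rightarrow> complex) set
    \<Rightarrow> ((complex \<Rightarrow> complex) \<Rightarrow> (complex \<Rightarrow> complex) \<Rightarrow> complex)
    \<Rightarrow> (complex \<Rightarrow> complex) \<Rightarrow> (complex \<Rightarrow> complex) set" where
  "cyc H ip g = hclosure H ip (fspan {(\<lambda>z. z ^ k * g z) | k::nat. True})"

definition reproducible :: "complex set \<Rightarrow> ((complex \<Rightarrow> complex) \<Rightarrow> (complex \<Rightarrow> complex) \<Rightarrow> complex)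
    \<Rightarrow> nat \<Rightarrow> complex \<Rightarrow> bool" where
  "reproducible \<Omega> ip m \<beta> \<longleftrightarrow>
     (\<exists>C. \<forall>p. cmod (poly ((pderiv ^^ m) p) \<beta>) \<le> C * hnorm ip (restr \<Omega> (poly p)))"

definition kern :: "complex set \<Rightarrow> (complex \<Rightarrow> complex) set
    \<Rightarrow> ((complex \<Rightarrow> complex) \<Rightarrow> (complex \<Rightarrow> complex) \<Rightarrow> complex)
    \<Rightarrow> nat \<Rightarrow> complex \<Rightarrow> (complex \<Rightarrow> complex)" where
  "kern \<Omega> H ip m \<beta> = (SOME k. k \<in> H \<and>
       (\<forall>p. ip (restr \<Omega> (poly p)) k = poly ((pderiv ^^ m) p) \<beta>))"

definition ro :: "complex set \<Rightarrow> ((complex \<Rightarrow> complex) \<Rightarrow> (complex \<Rightarrow> complex) \<Rightarrow> complex)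
    \<Rightarrow> complex \<Rightarrow> enat" where
  "ro \<Omega> ip \<beta> = (SUP m\<in>{m. reproducible \<Omega> ip m \<beta>}. enat m)"

definition rmult :: "complex set \<Rightarrow> ((complex \<Rightarrow> complex) \<Rightarrow> (complex \<Rightarrow> complex) \<Rightarrow> complex)
    \<Rightarrow> complex poly \<Rightarrow> complex \<Rightarrow> nat" where
  "rmult \<Omega> ip p \<beta> =
     (if reproducible \<Omega> ip 0 \<beta> \<and> order \<beta> p \<ge> 1
      then the_enat (min (enat (order \<beta> p)) (ro \<Omega> ip \<beta> + 1)) else 0)"

definition Rz :: "complex set \<Rightarrow> ((complex \<Rightarrow> complex) \<Rightarrow> (complex \<Rightarrow> complex) \<Rightarrow> complex)
    \<Rightarrow> complex poly \<Rightarrow> complex multiset" where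
  "Rz \<Omega> ip p = (\<Sum>\<beta>\<in>{x. poly p x = 0}. replicate_mset (rmult \<Omega> ip p \<beta>) \<beta>)"

end

theory Submission
  imports Defs "HOL-Computational_Algebra.Fundamental_Theorem_Algebra"
begin

(*
  [f] is the closure of the polynomial multiples of f, and f is a constant times the product
  of (z - beta) over its zeros with multiplicity.  If p |-> p^(j)(beta) is unbounded, then
  (z - beta)^j lies in the closure of the multiples of (z - beta)^(j+1): otherwise splitting
  p = t + (z - beta)^j s with t^(j) = 0, whose tail is bounded by induction on j, would bound
  p^(j)(beta) = j! s(beta).  Hence a zero beta contributes only min(order, ro(beta) + 1) factors.
  Every bounded functional p |-> p^(l)(beta) is represented by a kernel k_beta^(l), obtained from
  the nearest point to a polynomial in the closure of the functional's null space.  These kernels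
  are orthogonal to [f] below the multiplicity of beta; conversely a g orthogonal to k_beta^(m)
  and in the closure of the multiples of (z - beta)^m u, u(beta) /= 0, is in that of
  (z - beta)^(m+1) u, because <q (z - beta)^m u, k_beta^(m)> = m! u(beta) q(beta) controls the
  missing constant term.
*)

section \<open>Higher derivatives of polynomials at a point\<close>

lemma pderiv_linear [simp]: "pderiv [:a, 1:] = 1"
  by (simp add: pderiv_pCons)

lemma pderiv_power_mult:
  fixes X w :: "'a::idom poly"
  assumes "pderiv X = 1"
  shows "pderiv (X ^ Suc m * w) = X ^ m * (smult (of_nat (Suc m)) w + X * pderiv w)"
  by (simp only: pderiv_mult pderiv_power_Suc assms) (simp add: algebra_simps)

lemma higher_pderiv_mult:
  fixes X p :: "'a::idom poly"
  assumes "pderiv X = 1"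
  shows "(pderiv ^^ Suc k) (X * p) = smult (of_nat (Suc k)) ((pderiv ^^ k) p) + X * (pderiv ^^ Suc k) p"
proof (induction k)
  case (Suc k)
  then show ?case
    using assms by (simp add: pderiv_add pderiv_smult pderiv_mult algebra_simps)
      (rule poly_eqI, simp add: algebra_simps)
qed (simp add: pderiv_mult assms)

lemma higher_pderiv_linear_power_mult:
  fixes w :: "'a::{idom,ring_char_0} poly"
  shows "poly ((pderiv ^^ m) ([:-b,1:] ^ m * w)) b = fact m * poly w b"
proof (induction m arbitrary: w)
  case (Suc m)
  have "(pderiv ^^ Suc m) ([:-b,1:] ^ Suc m * w)
      = (pderiv ^^ m) ([:-b,1:] ^ m * (smult (of_nat (Suc m)) w + [:-b,1:] * pderiv w))"
    by (simp only: funpow_Suc_right o_apply pderiv_power_mult pderiv_linear)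
  then show ?case by (simp only: Suc.IH) (simp add: fact_Suc)
qed simp

lemma higher_pderiv_eq_0:
  fixes p :: "'a::{comm_semiring_1,semiring_no_zero_divisors,semiring_char_0} poly"
  assumes "degree p < k" shows "(pderiv ^^ k) p = 0"
proof -
  obtain j where k: "k = Suc j" using assms by (cases k) auto
  have "degree ((pderiv ^^ j) p) = 0" using assms k by (simp add: degree_higher_pderiv)
  then show ?thesis unfolding k by (simp add: pderiv_eq_0_iff)
qed

lemma higher_pderiv_mult_vanishes:
  fixes f :: "'a::{idom,ring_char_0} poly"
  assumes "l < order b f" shows "poly ((pderiv ^^ l) (q * f)) b = 0"
proof -
  have "[:-b,1:] ^ Suc l dvd [:-b,1:] ^ order b f" by (rule le_imp_power_dvd) (use assms in simp)
  then have "[:-b,1:] ^ Suc l dvd f" using order_1 dvd_trans by blast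
  then obtain w where w: "f = [:-b,1:] ^ Suc l * w" by (elim dvdE)
  have "q * f = [:-b,1:] ^ l * ([:-b,1:] * w * q)" unfolding w by (simp add: algebra_simps)
  then show ?thesis by (simp only: higher_pderiv_linear_power_mult) simp
qed

lemma poly_higher_pderiv_linear_mult:
  fixes p :: "'a::idom poly"
  shows "poly ((pderiv ^^ Suc k) ([:-b,1:] * p)) b = of_nat (Suc k) * poly ((pderiv ^^ k) p) b"
  by (simp only: higher_pderiv_mult[OF pderiv_linear]) simp

lemma linear_synthetic_div: "p = [:poly p c:] + [:-c, 1:] * synthetic_div p (c :: 'a::comm_ring_1)"
  using synthetic_div_correct'[of c p] by (simp only: add.commute)

lemma linear_power_mult_synthetic_div:
  fixes s :: "'a::comm_ring_1 poly"
  shows "[:-b,1:] ^ Suc c * synthetic_div s b = [:-b,1:] ^ c * s - smult (poly s b) ([:-b,1:] ^ c)"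
proof -
  have "X ^ Suc c * r = X ^ c * s - smult a (X ^ c)" if "s = [:a:] + X * r" for X r :: "'a poly" and a
    using that by (simp add: algebra_simps)
  then show ?thesis using linear_synthetic_div by blast
qed

lemma higher_pderiv_taylor:
  fixes s t :: "'a::{idom,ring_char_0} poly"
  assumes "(pderiv ^^ c) t = 0"
  shows "poly ((pderiv ^^ c) (t + [:-b,1:] ^ c * s)) b = fact c * poly s b"
  using assms by (simp add: higher_pderiv_add higher_pderiv_linear_power_mult)

lemma higher_pderiv_taylor_Suc:
  fixes t :: "'a::{idom,ring_char_0} poly"
  assumes "(pderiv ^^ c) t = 0"
  shows "(pderiv ^^ Suc c) (t + smult a ([:-b,1:] ^ c)) = 0"
  using assms higher_pderiv_eq_0[of "[:-b,1:] ^ c" "Suc c"]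
  by (simp add: higher_pderiv_add higher_pderiv_smult degree_power_eq del: funpow.simps)
    (simp add: funpow_Suc_right)

abbreviation roots_poly :: "'a::comm_ring_1 multiset \<Rightarrow> 'a poly" where
  "roots_poly M \<equiv> \<Prod>x\<in>#M. [:-x, 1:]"

lemma roots_poly_add_mset: "roots_poly (add_mset b M) = [:-b,1:] * roots_poly M"
  by (simp only: image_mset_add_mset prod_mset.add_mset)

lemma roots_poly_split:
  "roots_poly M = [:-b,1:] ^ count M b * roots_poly {#x \<in># M. x \<noteq> b#}"
  by (subst multiset_partition[of M "\<lambda>x. x = b"]) (simp add: filter_eq_replicate_mset)

lemma poly_roots_poly_eq_0_iff: "poly (roots_poly M) z = 0 \<longleftrightarrow> z \<in># (M :: 'a::idom multiset)"
  by (induction M) auto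

lemma fspan_monomial_mult:
  "fspan {(\<lambda>z. z ^ k * g z) | k::nat. True} = {(\<lambda>z. poly q z * g z) | q. True}"
proof (intro equalityI subsetI)
  fix h assume "h \<in> fspan {(\<lambda>z. z ^ k * g z) | k::nat. True}"
  then have "\<exists>n c gs. (\<forall>i<(n::nat). gs i \<in> {(\<lambda>z. z ^ k * g z) | k::nat. True}) \<and>
                h = (\<lambda>z. \<Sum>i<n. c i * gs i z)"
    unfolding fspan_def by simp
  then obtain n c gs where "(\<forall>i<(n::nat). gs i \<in> {(\<lambda>z. z ^ k * g z) | k::nat. True}) \<and>
                h = (\<lambda>z. \<Sum>i<n. c i * gs i z)"
    by blast
  then have gs: "\<forall>i<n. \<exists>k. gs i = (\<lambda>z. z ^ k * g z)" and h: "h = (\<lambda>z. \<Sum>i<n. c i * gs i z)"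
    by blast+
  then obtain k where k: "\<And>i. i < n \<Longrightarrow> gs i = (\<lambda>z. z ^ k i * g z)" by metis
  have "h = (\<lambda>z. poly (\<Sum>i<n. monom (c i) (k i)) z * g z)"
    unfolding h by (simp add: k poly_sum poly_monom sum_distrib_left mult_ac)
  then show "h \<in> {(\<lambda>z. poly q z * g z) | q. True}" by blast
next
  fix h assume "h \<in> {(\<lambda>z. poly q z * g z) | q. True}"
  then obtain q where h: "h = (\<lambda>z. poly q z * g z)" by blast
  have "h = (\<lambda>z. \<Sum>i<Suc (degree q). coeff q i * (z ^ i * g z))"
    unfolding h poly_altdef by (simp add: lessThan_Suc_atMost sum_distrib_left mult_ac)
  then show "h \<in> fspan {(\<lambda>z. z ^ k * g z) | k::nat. True}"
    unfolding fspan_def by (intro CollectI exI[of _ "Suc (degree q)"] exI[of _ "coeff q"]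
        exI[of _ "\<lambda>i z. z ^ i * g z"]) auto
qed

section \<open>Geometry of the Hilbert space\<close>

lemma Inf_square_approx:
  fixes d :: "'a \<Rightarrow> real"
  assumes "S \<noteq> {}" and nonneg: "\<And>g. g \<in> S \<Longrightarrow> 0 \<le> d g" and "0 < \<epsilon>"
  shows "\<exists>g\<in>S. (d g)\<^sup>2 < (Inf (d ` S))\<^sup>2 + \<epsilon>"
proof -
  have "0 \<le> Inf (d ` S)" using assms by (intro cInf_greatest) auto
  then have "Inf (d ` S) < sqrt ((Inf (d ` S))\<^sup>2 + \<epsilon>)"
    using real_sqrt_less_mono[of "(Inf (d ` S))\<^sup>2" "(Inf (d ` S))\<^sup>2 + \<epsilon>"] \<open>0 < \<epsilon>\<close> by simp
  then obtain g where g: "g \<in> S" "d g < sqrt ((Inf (d ` S))\<^sup>2 + \<epsilon>)"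
    using cInf_lessD[of "d ` S"] \<open>S \<noteq> {}\<close> by blast
  then have "sqrt ((d g)\<^sup>2) < sqrt ((Inf (d ` S))\<^sup>2 + \<epsilon>)" using nonneg by simp
  then show ?thesis unfolding real_sqrt_less_iff using g(1) by blast
qed

locale analytic_hilbert_space =
  fixes Om :: "complex set" and H :: "(complex \<Rightarrow> complex) set"
    and ip :: "(complex \<Rightarrow> complex) \<Rightarrow> (complex \<Rightarrow> complex) \<Rightarrow> complex"
  assumes AHS: "AHS Om H ip"
begin

abbreviation nrm :: "(complex \<Rightarrow> complex) \<Rightarrow> real" where "nrm g \<equiv> hnorm ip g"

abbreviation rpoly :: "complex poly \<Rightarrow> complex \<Rightarrow> complex" where "rpoly p \<equiv> restr Om (poly p)"

lemma zero_in_H: "(\<lambda>z. 0) \<in> H"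
  using AHS unfolding AHS_def by (elim conjE) metis

lemma add_in_H: "g \<in> H \<Longrightarrow> h \<in> H \<Longrightarrow> (\<lambda>z. g z + h z) \<in> H"
  using AHS unfolding AHS_def by (elim conjE) metis

lemma scale_in_H: "g \<in> H \<Longrightarrow> (\<lambda>z. c * g z) \<in> H"
  using AHS unfolding AHS_def by (elim conjE) metis

lemma shift_in_H: "g \<in> H \<Longrightarrow> (\<lambda>z. z * g z) \<in> H"
  using AHS unfolding AHS_def by (elim conjE) metis

lemma rpoly_in_H: "rpoly p \<in> H"
  using AHS unfolding AHS_def by (elim conjE) metis

lemma rpoly_add: "(\<lambda>z. rpoly p z + rpoly q z) = rpoly (p + q)"
  by (simp add: restr_def fun_eq_iff)

lemma rpoly_diff: "(\<lambda>z. rpoly p z - rpoly q z) = rpoly (p - q)"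
  by (simp add: restr_def fun_eq_iff)

lemma rpoly_smult: "(\<lambda>z. c * rpoly p z) = rpoly (smult c p)"
  by (simp add: restr_def fun_eq_iff)

lemma rpoly_mult: "(\<lambda>z. poly w z * rpoly q z) = rpoly (w * q)"
  by (simp add: restr_def fun_eq_iff)

lemma ip_add_left: "g \<in> H \<Longrightarrow> h \<in> H \<Longrightarrow> k \<in> H \<Longrightarrow> ip (\<lambda>z. g z + h z) k = ip g k + ip h k"
  using AHS unfolding AHS_def by (elim conjE) metis

lemma ip_scale_left: "g \<in> H \<Longrightarrow> k \<in> H \<Longrightarrow> ip (\<lambda>z. c * g z) k = c * ip g k"
  using AHS unfolding AHS_def by (elim conjE) metis

lemma ip_commute: "g \<in> H \<Longrightarrow> k \<in> H \<Longrightarrow> ip k g = cnj (ip g k)"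
  using AHS unfolding AHS_def by (elim conjE) metis

lemma ip_self_nonneg: "g \<in> H \<Longrightarrow> 0 \<le> Re (ip g g)"
  using AHS unfolding AHS_def by (elim conjE) metis

lemma ip_self_eq_0: "g \<in> H \<Longrightarrow> ip g g = 0 \<Longrightarrow> g = (\<lambda>z. 0)"
  using AHS unfolding AHS_def by (elim conjE) metis

lemma H_complete:
  "(\<And>n. s n \<in> H) \<Longrightarrow> (\<forall>e>0. \<exists>N. \<forall>m\<ge>N. \<forall>n\<ge>N. hdist ip (s m) (s n) < e) \<Longrightarrow>
     \<exists>g\<in>H. (\<lambda>n. hdist ip (s n) g) \<longlonglongrightarrow> 0"
  using AHS unfolding AHS_def by (elim conjE) metis

lemma shift_bounded: "\<exists>C. \<forall>g\<in>H. nrm (\<lambda>z. z * g z) \<le> C * nrm g"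
  using AHS unfolding AHS_def by (elim conjE) metis

lemma polys_dense: "g \<in> H \<Longrightarrow> e > 0 \<Longrightarrow> \<exists>p. nrm (\<lambda>z. g z - rpoly p z) < e"
  using AHS unfolding AHS_def hdist_def by (elim conjE) metis

lemma diff_in_H: "g \<in> H \<Longrightarrow> h \<in> H \<Longrightarrow> (\<lambda>z. g z - h z) \<in> H"
  using add_in_H[OF _ scale_in_H[of h "-1"]] by simp

lemma poly_mult_in_H: "g \<in> H \<Longrightarrow> (\<lambda>z. poly w z * g z) \<in> H"
proof (induction w arbitrary: g)
  case (pCons a w)
  have "(\<lambda>z. a * g z + z * (poly w z * g z)) \<in> H"
    by (intro add_in_H scale_in_H shift_in_H pCons)
  then show ?case by (simp add: algebra_simps)
qed (simp add: zero_in_H)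

lemma ip_diff_left: "g \<in> H \<Longrightarrow> h \<in> H \<Longrightarrow> k \<in> H \<Longrightarrow> ip (\<lambda>z. g z - h z) k = ip g k - ip h k"
  using ip_add_left[OF _ scale_in_H, of g h k "-1"] ip_scale_left[of h k "-1"] by simp

lemma ip_add_right: "g \<in> H \<Longrightarrow> h \<in> H \<Longrightarrow> k \<in> H \<Longrightarrow> ip k (\<lambda>z. g z + h z) = ip k g + ip k h"
  by (simp add: ip_commute[of _ k] add_in_H ip_add_left)

lemma ip_diff_right: "g \<in> H \<Longrightarrow> h \<in> H \<Longrightarrow> k \<in> H \<Longrightarrow> ip k (\<lambda>z. g z - h z) = ip k g - ip k h"
  by (simp add: ip_commute[of _ k] diff_in_H ip_diff_left)

lemma ip_scale_right: "g \<in> H \<Longrightarrow> k \<in> H \<Longrightarrow> ip k (\<lambda>z. c * g z) = cnj c * ip k g"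
  by (simp add: ip_commute[of _ k] scale_in_H ip_scale_left)

lemma ip_zero_left: "k \<in> H \<Longrightarrow> ip (\<lambda>z. 0) k = 0"
  using ip_scale_left[OF zero_in_H, of k 0] by simp

lemma ip_zero_right: "k \<in> H \<Longrightarrow> ip k (\<lambda>z. 0) = 0"
  using ip_scale_right[OF zero_in_H, of k 0] by simp

lemma hnorm_nonneg: "g \<in> H \<Longrightarrow> 0 \<le> nrm g"
  unfolding hnorm_def by (simp add: ip_self_nonneg)

lemma hnorm_square: "g \<in> H \<Longrightarrow> (nrm g)\<^sup>2 = Re (ip g g)"
  unfolding hnorm_def by (simp add: ip_self_nonneg)

lemma ip_self_eq_hnorm: "g \<in> H \<Longrightarrow> ip g g = of_real ((nrm g)\<^sup>2)"
proof -
  assume g: "g \<in> H"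
  have "Im (ip g g) = 0" using ip_commute[OF g g] by (metis cnj.simps(2) neg_equal_zero)
  then show ?thesis using hnorm_square[OF g] by (simp add: complex_eq_iff)
qed

lemma hnorm_zero: "nrm (\<lambda>z. 0) = 0"
  unfolding hnorm_def using ip_zero_left[OF zero_in_H] by simp

lemma hnorm_eq_0: "g \<in> H \<Longrightarrow> nrm g = 0 \<Longrightarrow> g = (\<lambda>z. 0)"
  using ip_self_eq_hnorm ip_self_eq_0 by fastforce

lemma hnorm_scale: "g \<in> H \<Longrightarrow> nrm (\<lambda>z. c * g z) = cmod c * nrm g"
proof -
  assume g: "g \<in> H"
  have "ip (\<lambda>z. c * g z) (\<lambda>z. c * g z) = c * cnj c * ip g g"
    using ip_scale_left[OF g scale_in_H[OF g]] ip_scale_right[OF g g] by simp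
  also have "\<dots> = of_real ((cmod c * nrm g)\<^sup>2)"
    using ip_self_eq_hnorm[OF g] by (simp add: complex_norm_square[symmetric] power_mult_distrib)
  finally have "(nrm (\<lambda>z. c * g z))\<^sup>2 = (cmod c * nrm g)\<^sup>2"
    using hnorm_square[OF scale_in_H[OF g]] by simp
  then show ?thesis
    using hnorm_nonneg[OF g] hnorm_nonneg[OF scale_in_H[OF g]] by (simp add: power2_eq_iff_nonneg)
qed

lemma hnorm_rpoly_smult: "nrm (rpoly (smult c p)) = cmod c * nrm (rpoly p)"
  unfolding rpoly_smult[symmetric] by (rule hnorm_scale[OF rpoly_in_H])

lemma hnorm_sub_projection:
  assumes g: "g \<in> H" and h: "h \<in> H" and "nrm h \<noteq> 0"
  shows "(nrm (\<lambda>z. g z - ip g h / of_real ((nrm h)\<^sup>2) * h z))\<^sup>2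
       = (nrm g)\<^sup>2 - (cmod (ip g h))\<^sup>2 / (nrm h)\<^sup>2"
proof -
  define a where "a = ip g h"
  define nh where "nh = (nrm h)\<^sup>2"
  define t where "t = a / of_real nh"
  define v where "v = (\<lambda>z. g z - t * h z)"
  have nh: "nh \<noteq> 0" unfolding nh_def using assms(3) by simp
  have v: "v \<in> H" unfolding v_def by (intro diff_in_H g scale_in_H h)
  have "ip v v = ip g v - t * ip h v"
    using ip_diff_left[OF g scale_in_H[OF h] v] ip_scale_left[OF h v] by (simp add: v_def)
  also have "ip g v = ip g g - cnj t * a"
    unfolding v_def a_def using ip_diff_right[OF g scale_in_H[OF h] g] ip_scale_right[OF h g] by simp
  also have "ip h v = ip h g - cnj t * ip h h"
    unfolding v_def using ip_diff_right[OF g scale_in_H[OF h] h] ip_scale_right[OF h h] by simp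
  finally have "ip v v = of_real ((nrm g)\<^sup>2) - cnj t * a - t * (cnj a - cnj t * of_real nh)"
    using ip_self_eq_hnorm[OF g] ip_self_eq_hnorm[OF h] ip_commute[OF g h]
    unfolding a_def nh_def by simp
  also have "\<dots> = of_real ((nrm g)\<^sup>2) - (a * cnj a) / of_real nh"
    unfolding t_def using nh by (simp add: field_simps)
  also have "\<dots> = of_real ((nrm g)\<^sup>2 - (cmod a)\<^sup>2 / nh)"
    using nh by (simp add: complex_norm_square[symmetric])
  finally show ?thesis using hnorm_square[OF v] unfolding v_def t_def a_def nh_def by simp
qed

lemma Cauchy_Schwarz:
  assumes g: "g \<in> H" and h: "h \<in> H"
  shows "cmod (ip g h) \<le> nrm g * nrm h"
proof (cases "nrm h = 0")
  case True
  then show ?thesis using hnorm_eq_0[OF h] ip_zero_right[OF g] by simp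
next
  case False
  have "0 \<le> (nrm g)\<^sup>2 - (cmod (ip g h))\<^sup>2 / (nrm h)\<^sup>2"
    unfolding hnorm_sub_projection[OF g h False, symmetric] by simp
  then have "(cmod (ip g h))\<^sup>2 \<le> (nrm g * nrm h)\<^sup>2"
    using False by (simp add: field_simps power_mult_distrib)
  then show ?thesis
    using hnorm_nonneg[OF g] hnorm_nonneg[OF h] by (meson mult_nonneg_nonneg power2_le_imp_le)
qed

lemma orthogonal_if_minimal:
  assumes y: "y \<in> H" and x: "x \<in> H" and min: "\<And>t. nrm y \<le> nrm (\<lambda>z. y z - t * x z)"
  shows "ip x y = 0"
proof (cases "nrm x = 0")
  case True
  then show ?thesis using hnorm_eq_0[OF x] ip_zero_left[OF y] by simp
next
  case False
  have "(nrm y)\<^sup>2 \<le> (nrm (\<lambda>z. y z - ip y x / of_real ((nrm x)\<^sup>2) * x z))\<^sup>2"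
    using min hnorm_nonneg[OF y] by (rule power_mono)
  then have "(cmod (ip y x))\<^sup>2 / (nrm x)\<^sup>2 \<le> 0"
    unfolding hnorm_sub_projection[OF y x False] by simp
  then have "ip y x = 0" using False by (simp add: divide_le_0_iff)
  then show ?thesis using ip_commute[OF y x] by simp
qed

lemma hnorm_add_le:
  assumes g: "g \<in> H" and h: "h \<in> H"
  shows "nrm (\<lambda>z. g z + h z) \<le> nrm g + nrm h"
proof -
  have "ip (\<lambda>z. g z + h z) (\<lambda>z. g z + h z) = ip g g + ip g h + (ip h g + ip h h)"
    using ip_add_left[OF g h add_in_H[OF g h]] ip_add_right[OF g h g] ip_add_right[OF g h h] by simp
  then have "(nrm (\<lambda>z. g z + h z))\<^sup>2 = (nrm g)\<^sup>2 + (nrm h)\<^sup>2 + 2 * Re (ip g h)"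
    using hnorm_square[OF add_in_H[OF g h]] hnorm_square[OF g] hnorm_square[OF h] ip_commute[OF g h]
    by simp
  also have "\<dots> \<le> (nrm g + nrm h)\<^sup>2"
    using Cauchy_Schwarz[OF g h] complex_Re_le_cmod[of "ip g h"] by (simp add: power2_sum)
  finally show ?thesis
    using hnorm_nonneg[OF g] hnorm_nonneg[OF h] by (meson add_nonneg_nonneg power2_le_imp_le)
qed

lemma hnorm_diff_commute: "g \<in> H \<Longrightarrow> h \<in> H \<Longrightarrow> nrm (\<lambda>z. g z - h z) = nrm (\<lambda>z. h z - g z)"
  using hnorm_scale[OF diff_in_H, of g h "-1"] by simp

lemma hnorm_diff_le: "g \<in> H \<Longrightarrow> h \<in> H \<Longrightarrow> nrm (\<lambda>z. g z - h z) \<le> nrm g + nrm h"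
  using hnorm_add_le[OF _ scale_in_H, of g h "-1"] hnorm_scale[of h "-1"] by simp

lemma hnorm_triangle:
  "f \<in> H \<Longrightarrow> g \<in> H \<Longrightarrow> h \<in> H \<Longrightarrow>
     nrm (\<lambda>z. f z - h z) \<le> nrm (\<lambda>z. f z - g z) + nrm (\<lambda>z. g z - h z)"
  using hnorm_add_le[OF diff_in_H diff_in_H, of f g g h] by simp

lemma parallelogram:
  assumes g: "g \<in> H" and h: "h \<in> H"
  shows "(nrm (\<lambda>z. g z - h z))\<^sup>2 + (nrm (\<lambda>z. g z + h z))\<^sup>2 = 2 * (nrm g)\<^sup>2 + 2 * (nrm h)\<^sup>2"
proof -
  have "ip (\<lambda>z. g z - h z) (\<lambda>z. g z - h z) = ip g g - ip g h - (ip h g - ip h h)"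
    using ip_diff_left[OF g h diff_in_H[OF g h]] ip_diff_right[OF g h g] ip_diff_right[OF g h h] by simp
  moreover have "ip (\<lambda>z. g z + h z) (\<lambda>z. g z + h z) = ip g g + ip g h + (ip h g + ip h h)"
    using ip_add_left[OF g h add_in_H[OF g h]] ip_add_right[OF g h g] ip_add_right[OF g h h] by simp
  ultimately show ?thesis
    using hnorm_square[OF diff_in_H[OF g h]] hnorm_square[OF add_in_H[OF g h]]
      hnorm_square[OF g] hnorm_square[OF h]
    by simp
qed

lemma lincomb_in_H: "(\<And>i. i < (n::nat) \<Longrightarrow> gs i \<in> H) \<Longrightarrow> (\<lambda>z. \<Sum>i<n. c i * gs i z) \<in> H"
  by (induction n) (simp_all add: zero_in_H add_in_H scale_in_H)

lemma ip_lincomb_right: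
  "(\<And>i. i < (n::nat) \<Longrightarrow> gs i \<in> H) \<Longrightarrow> g \<in> H \<Longrightarrow>
     ip g (\<lambda>z. \<Sum>i<n. c i * gs i z) = (\<Sum>i<n. cnj (c i) * ip g (gs i))"
proof (induction n)
  case (Suc n)
  have gs: "\<And>i. i < n \<Longrightarrow> gs i \<in> H" "gs n \<in> H" using Suc.prems(1) by simp_all
  have "ip g (\<lambda>z. \<Sum>i<Suc n. c i * gs i z)
      = ip g (\<lambda>z. (\<Sum>i<n. c i * gs i z) + c n * gs n z)" by simp
  also have "\<dots> = ip g (\<lambda>z. \<Sum>i<n. c i * gs i z) + cnj (c n) * ip g (gs n)"
    using ip_add_right[OF lincomb_in_H[OF gs(1)] scale_in_H[OF gs(2)] Suc.prems(2)]
      ip_scale_right[OF gs(2) Suc.prems(2)] by simp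
  finally show ?case using Suc.IH[OF gs(1) Suc.prems(2)] by simp
qed (simp add: ip_zero_right)

lemma perp_fspan: "K \<subseteq> H \<Longrightarrow> perp H ip (fspan K) = perp H ip K"
proof (intro equalityI subsetI)
  fix g assume g: "g \<in> perp H ip (fspan K)"
  have "k \<in> fspan K" if "k \<in> K" for k
    unfolding fspan_def using that
    by (intro CollectI exI[of _ 1] exI[of _ "\<lambda>_. 1"] exI[of _ "\<lambda>_. k"]) simp
  then show "g \<in> perp H ip K" using g unfolding perp_def by blast
next
  fix g assume K: "K \<subseteq> H" and g: "g \<in> perp H ip K"
  have "ip g h = 0" if h: "h \<in> fspan K" for h
  proof -
    obtain n c gs where "(\<forall>i<(n::nat). gs i \<in> K) \<and> h = (\<lambda>z. \<Sum>i<n. c i * gs i z)"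
      using h unfolding fspan_def by blast
    then have gs: "\<And>i. i < n \<Longrightarrow> gs i \<in> K" and h: "h = (\<lambda>z. \<Sum>i<n. c i * gs i z)" by blast+
    have gH: "g \<in> H" using g unfolding perp_def by blast
    have "ip g h = (\<Sum>i<n. cnj (c i) * ip g (gs i))"
      unfolding h using gs K by (intro ip_lincomb_right gH) blast
    also have "\<dots> = 0" using gs g unfolding perp_def by simp
    finally show ?thesis .
  qed
  then show "g \<in> perp H ip (fspan K)" using g unfolding perp_def by blast
qed

lemma Cauchy_if_hnorm_diff_square_le:
  assumes "\<epsilon> \<longlonglongrightarrow> 0" and "\<And>i j. (nrm (\<lambda>z. s i z - s j z))\<^sup>2 \<le> 2 * \<epsilon> i + 2 * \<epsilon> j"
  shows "\<forall>e>0. \<exists>N. \<forall>m\<ge>N. \<forall>n\<ge>N. hdist ip (s m) (s n) < e"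
proof (intro allI impI)
  fix e :: real assume e: "e > 0"
  then obtain N where N: "\<And>n. n \<ge> N \<Longrightarrow> \<bar>\<epsilon> n\<bar> < e\<^sup>2 / 4"
    using LIMSEQ_D[OF assms(1), of "e\<^sup>2 / 4"] by auto
  have "hdist ip (s m) (s n) < e" if "N \<le> m" "N \<le> n" for m n
  proof -
    have "(hdist ip (s m) (s n))\<^sup>2 < e\<^sup>2"
      using assms(2)[of m n] N[OF that(1)] N[OF that(2)] unfolding hdist_def by linarith
    then show ?thesis using e by (simp add: power_less_imp_less_base)
  qed
  then show "\<exists>N. \<forall>m\<ge>N. \<forall>n\<ge>N. hdist ip (s m) (s n) < e" by blast
qed

lemma hclosure_if_tendsto:
  assumes "\<And>j. s j \<in> S" "S \<subseteq> H" "w \<in> H" "(\<lambda>j. hdist ip (s j) w) \<longlonglongrightarrow> 0"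
  shows "w \<in> hclosure H ip S"
proof -
  have "\<exists>h\<in>S. hdist ip w h < e" if "e > 0" for e
  proof -
    obtain j where "hdist ip (s j) w < e"
      using \<open>e > 0\<close> assms(4) by (metis (full_types) LIMSEQ_D diff_zero abs_less_iff real_norm_def le_refl)
    then show ?thesis
      using assms(1-3) hnorm_diff_commute[of w "s j"] unfolding hdist_def by (metis subsetD)
  qed
  then show ?thesis unfolding hclosure_def using assms(3) by blast
qed

lemma convex_dist_bound:
  assumes "S \<subseteq> H" and mid: "\<And>g h. g \<in> S \<Longrightarrow> h \<in> S \<Longrightarrow> (\<lambda>z. (g z + h z) / 2) \<in> S"
    and x: "x \<in> H" and \<delta>: "0 \<le> \<delta>" "\<And>g. g \<in> S \<Longrightarrow> \<delta> \<le> nrm (\<lambda>z. x z - g z)"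
    and gh: "g \<in> S" "h \<in> S"
  shows "(nrm (\<lambda>z. g z - h z))\<^sup>2
       \<le> 2 * ((nrm (\<lambda>z. x z - g z))\<^sup>2 - \<delta>\<^sup>2) + 2 * ((nrm (\<lambda>z. x z - h z))\<^sup>2 - \<delta>\<^sup>2)"
proof -
  have g: "g \<in> H" and h: "h \<in> H" using gh assms(1) by auto
  have "\<delta> \<le> nrm (\<lambda>z. x z - (g z + h z) / 2)" using \<delta>(2) mid[OF gh] by simp
  then have "(2 * \<delta>)\<^sup>2 \<le> (cmod 2 * nrm (\<lambda>z. x z - (g z + h z) / 2))\<^sup>2"
    using \<delta>(1) by (simp add: power_mono)
  also have "cmod 2 * nrm (\<lambda>z. x z - (g z + h z) / 2) = nrm (\<lambda>z. 2 * (x z - (g z + h z) / 2))"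
    by (rule sym, rule hnorm_scale[OF diff_in_H[OF x subsetD[OF assms(1) mid[OF gh]]]])
  also have "\<dots> = nrm (\<lambda>z. (x z - h z) + (x z - g z))"
    by (rule arg_cong[where f = nrm]) (simp add: fun_eq_iff field_simps)
  finally show ?thesis
    using parallelogram[OF diff_in_H[OF x h] diff_in_H[OF x g]] by (simp add: power_mult_distrib)
qed

lemma nearest_point_in_hclosure:
  assumes S: "S \<subseteq> H" "S \<noteq> {}"
    and mid: "\<And>g h. g \<in> S \<Longrightarrow> h \<in> S \<Longrightarrow> (\<lambda>z. (g z + h z) / 2) \<in> S"
    and x: "x \<in> H"
  obtains w where "w \<in> hclosure H ip S" "\<And>g. g \<in> S \<Longrightarrow> nrm (\<lambda>z. x z - w z) \<le> nrm (\<lambda>z. x z - g z)"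
proof -
  define d where "d g = nrm (\<lambda>z. x z - g z)" for g
  define \<delta> where "\<delta> = Inf (d ` S)"
  define \<epsilon> where "\<epsilon> j = inverse (real (Suc j))" for j
  have \<epsilon>: "\<epsilon> \<longlonglongrightarrow> 0" "\<And>j. 0 < \<epsilon> j"
    unfolding \<epsilon>_def by (rule LIMSEQ_inverse_real_of_nat) simp
  have bdd: "bdd_below (d ` S)"
    using S(1) x unfolding d_def by (intro bdd_belowI[of _ 0]) (auto intro: hnorm_nonneg diff_in_H)
  have \<delta>_le: "\<delta> \<le> d g" if "g \<in> S" for g
    unfolding \<delta>_def using bdd that by (intro cInf_lower) auto
  have \<delta>_nonneg: "0 \<le> \<delta>"
    unfolding \<delta>_def d_def using S x by (intro cInf_greatest) (auto intro: hnorm_nonneg diff_in_H)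
  have "\<exists>g\<in>S. (d g)\<^sup>2 < \<delta>\<^sup>2 + \<epsilon> j" for j
    unfolding \<delta>_def using S(1) x
    by (intro Inf_square_approx[OF S(2) _ \<epsilon>(2)]) (auto simp: d_def intro: hnorm_nonneg diff_in_H)
  then have "\<forall>j. \<exists>g. g \<in> S \<and> (d g)\<^sup>2 < \<delta>\<^sup>2 + \<epsilon> j" by blast
  from choice[OF this] obtain s
    where s: "\<And>j. s j \<in> S" "\<And>j. (d (s j))\<^sup>2 < \<delta>\<^sup>2 + \<epsilon> j" by blast
  have "(nrm (\<lambda>z. s i z - s j z))\<^sup>2 \<le> 2 * \<epsilon> i + 2 * \<epsilon> j" for i j
  proof -
    have "(nrm (\<lambda>z. s i z - s j z))\<^sup>2 \<le> 2 * ((d (s i))\<^sup>2 - \<delta>\<^sup>2) + 2 * ((d (s j))\<^sup>2 - \<delta>\<^sup>2)"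
      unfolding d_def using \<delta>_le unfolding d_def
      by (intro convex_dist_bound[OF S(1) mid x \<delta>_nonneg _ s(1) s(1)])
    then show ?thesis using s(2)[of i] s(2)[of j] by argo
  qed
  then obtain w where w: "w \<in> H" "(\<lambda>j. hdist ip (s j) w) \<longlonglongrightarrow> 0"
    using H_complete[of s] Cauchy_if_hnorm_diff_square_le[OF \<epsilon>(1)] s(1) S(1) by blast
  have "d w \<le> sqrt (\<delta>\<^sup>2 + \<epsilon> j) + hdist ip (s j) w" for j
  proof -
    have "d w \<le> d (s j) + hdist ip (s j) w"
      unfolding d_def hdist_def using hnorm_triangle[OF x _ w(1)] s(1) S(1) by blast
    moreover have "d (s j) \<le> sqrt (\<delta>\<^sup>2 + \<epsilon> j)"
      using s(2)[of j] by (intro real_le_rsqrt) simp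
    ultimately show ?thesis by simp
  qed
  moreover have "(\<lambda>j. sqrt (\<delta>\<^sup>2 + \<epsilon> j) + hdist ip (s j) w) \<longlonglongrightarrow> sqrt (\<delta>\<^sup>2 + 0) + 0"
    by (intro tendsto_intros w(2) \<epsilon>(1))
  ultimately have "d w \<le> \<delta>"
    using \<delta>_nonneg by (simp add: LIMSEQ_le_const)
  show ?thesis
  proof (rule that)
    show "w \<in> hclosure H ip S" by (rule hclosure_if_tendsto[OF s(1) S(1) w])
    show "nrm (\<lambda>z. x z - w z) \<le> nrm (\<lambda>z. x z - g z)" if "g \<in> S" for g
      using \<open>d w \<le> \<delta>\<close> \<delta>_le[OF that] unfolding d_def by linarith
  qed
qed

lemma ip_eq_0_on_hclosure:
  assumes "S \<subseteq> H" "y \<in> H" "\<And>g. g \<in> S \<Longrightarrow> ip g y = 0" "w \<in> hclosure H ip S"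
  shows "ip w y = 0"
proof -
  have w: "w \<in> H" using assms(4) unfolding hclosure_def by blast
  have "cmod (ip w y) \<le> e" if "e > 0" for e
  proof -
    have "e / (nrm y + 1) > 0" using that hnorm_nonneg[OF assms(2)] by simp
    then obtain h where h: "h \<in> S" "nrm (\<lambda>z. w z - h z) < e / (nrm y + 1)"
      using assms(4) unfolding hclosure_def hdist_def by blast
    have hH: "h \<in> H" using h(1) assms(1) by blast
    have "ip w y = ip (\<lambda>z. w z - h z) y"
      using ip_diff_left[OF w hH assms(2)] assms(3)[OF h(1)] by simp
    then have "cmod (ip w y) \<le> nrm (\<lambda>z. w z - h z) * nrm y"
      using Cauchy_Schwarz[OF diff_in_H[OF w hH] assms(2)] by simp
    also have "\<dots> \<le> e / (nrm y + 1) * nrm y"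
      using h(2) hnorm_nonneg[OF assms(2)] by (intro mult_right_mono) auto
    also have "\<dots> \<le> e"
      using that hnorm_nonneg[OF assms(2)] by (simp add: field_simps)
    finally show ?thesis .
  qed
  then show ?thesis using field_le_epsilon[of "cmod (ip w y)" 0] by simp
qed

lemma orthogonal_projection:
  assumes S: "S \<subseteq> H" "(\<lambda>z. 0) \<in> S"
    and add: "\<And>g h. g \<in> S \<Longrightarrow> h \<in> S \<Longrightarrow> (\<lambda>z. g z + h z) \<in> S"
    and scale: "\<And>g c. g \<in> S \<Longrightarrow> (\<lambda>z. c * g z) \<in> S"
    and x: "x \<in> H"
  obtains w where "w \<in> hclosure H ip S" "\<And>g. g \<in> S \<Longrightarrow> ip g (\<lambda>z. x z - w z) = 0"
proof -
  have "(\<lambda>z. (g z + h z) / 2) \<in> S" if "g \<in> S" "h \<in> S" for g h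
    using scale[OF add[OF that], of "1 / 2"] by simp
  then obtain w where w: "w \<in> hclosure H ip S"
    and near: "\<And>g. g \<in> S \<Longrightarrow> nrm (\<lambda>z. x z - w z) \<le> nrm (\<lambda>z. x z - g z)"
    using nearest_point_in_hclosure[OF S(1) _ _ x] S(2) by blast
  have wH: "w \<in> H" using w unfolding hclosure_def by blast
  have "ip g (\<lambda>z. x z - w z) = 0" if g: "g \<in> S" for g
  proof (rule orthogonal_if_minimal[OF diff_in_H[OF x wH]])
    show "g \<in> H" using g S(1) by blast
    show "nrm (\<lambda>z. x z - w z) \<le> nrm (\<lambda>z. x z - w z - t * g z)" for t
    proof (rule field_le_epsilon)
      fix e :: real assume "e > 0"
      then obtain h where h: "h \<in> S" "nrm (\<lambda>z. w z - h z) < e"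
        using w unfolding hclosure_def hdist_def by blast
      have "nrm (\<lambda>z. x z - w z) \<le> nrm (\<lambda>z. x z - (h z + t * g z))"
        using near add[OF h(1) scale[OF g]] by blast
      also have "\<dots> = nrm (\<lambda>z. (x z - w z - t * g z) + (w z - h z))"
        by (simp add: algebra_simps)
      also have "\<dots> \<le> nrm (\<lambda>z. x z - w z - t * g z) + nrm (\<lambda>z. w z - h z)"
        using g h(1) S(1) x wH by (intro hnorm_add_le diff_in_H scale_in_H) auto
      finally show "nrm (\<lambda>z. x z - w z) \<le> nrm (\<lambda>z. x z - w z - t * g z) + e"
        using h(2) by linarith
    qed
  qed
  then show ?thesis using that w by blast
qed

lemma kernel_rpoly_subspace:
  fixes L :: "complex poly \<Rightarrow> complex"
  assumes add: "\<And>p q. L (p + q) = L p + L q" and smult: "\<And>c p. L (smult c p) = c * L p"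
  defines "S \<equiv> {rpoly n | n. L n = 0}"
  shows "(\<lambda>z. 0) \<in> S"
    and "g \<in> S \<Longrightarrow> h \<in> S \<Longrightarrow> (\<lambda>z. g z + h z) \<in> S"
    and "g \<in> S \<Longrightarrow> (\<lambda>z. c * g z) \<in> S"
proof -
  have "L 0 = 0" using smult[of 0 0] by simp
  moreover have "(\<lambda>z. 0) = rpoly 0" by (simp add: restr_def fun_eq_iff)
  ultimately show "(\<lambda>z. 0) \<in> S" unfolding S_def by blast
next
  assume "g \<in> S" "h \<in> S"
  then obtain m n where "g = rpoly m" "h = rpoly n" "L m = 0" "L n = 0" unfolding S_def by blast
  then have "(\<lambda>z. g z + h z) = rpoly (m + n)" "L (m + n) = 0" by (simp_all add: rpoly_add add)
  then show "(\<lambda>z. g z + h z) \<in> S" unfolding S_def by blast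
next
  assume "g \<in> S"
  then obtain n where "g = rpoly n" "L n = 0" unfolding S_def by blast
  then have "(\<lambda>z. c * g z) = rpoly (smult c n)" "L (smult c n) = 0" by (simp_all add: rpoly_smult smult)
  then show "(\<lambda>z. c * g z) \<in> S" unfolding S_def by blast
qed

lemma rpoly_notin_hclosure_kernel:
  fixes L :: "complex poly \<Rightarrow> complex"
  assumes diff: "\<And>p q. L (p - q) = L p - L q" and bounded: "\<And>p. cmod (L p) \<le> K * nrm (rpoly p)"
    and "L p0 \<noteq> 0"
  shows "rpoly p0 \<notin> hclosure H ip {rpoly n | n. L n = 0}"
proof
  assume "rpoly p0 \<in> hclosure H ip {rpoly n | n. L n = 0}"
  moreover have "cmod (L p0) / (\<bar>K\<bar> + 1) > 0" using \<open>L p0 \<noteq> 0\<close> by simp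
  ultimately obtain h where h: "h \<in> {rpoly n | n. L n = 0}" "hdist ip (rpoly p0) h < cmod (L p0) / (\<bar>K\<bar> + 1)"
    unfolding hclosure_def by blast
  then obtain n where "h = rpoly n" and n: "L n = 0" by blast
  with h(2) have dist: "nrm (rpoly (p0 - n)) < cmod (L p0) / (\<bar>K\<bar> + 1)"
    unfolding hdist_def by (simp only: rpoly_diff)
  have "cmod (L p0) \<le> K * nrm (rpoly (p0 - n))" using bounded[of "p0 - n"] by (simp add: diff n)
  also have "\<dots> \<le> \<bar>K\<bar> * nrm (rpoly (p0 - n))"
    using hnorm_nonneg[OF rpoly_in_H] by (intro mult_right_mono) auto
  also have "\<dots> \<le> \<bar>K\<bar> * (cmod (L p0) / (\<bar>K\<bar> + 1))" using dist by (intro mult_left_mono) auto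
  also have "\<dots> < cmod (L p0)" using \<open>L p0 \<noteq> 0\<close> by (simp add: field_simps)
  finally show False by simp
qed

lemma bounded_functional_representable:
  fixes L :: "complex poly \<Rightarrow> complex"
  assumes add: "\<And>p q. L (p + q) = L p + L q" and smult: "\<And>c p. L (smult c p) = c * L p"
    and bounded: "\<And>p. cmod (L p) \<le> K * nrm (rpoly p)"
  shows "\<exists>k\<in>H. \<forall>p. ip (rpoly p) k = L p"
proof (cases "\<forall>p. L p = 0")
  case True
  then show ?thesis using ip_zero_right[OF rpoly_in_H] zero_in_H by auto
next
  case False
  then obtain p1 where "L p1 \<noteq> 0" by blast
  define p0 where "p0 = smult (1 / L p1) p1"
  have Lp0: "L p0 = 1" unfolding p0_def smult using \<open>L p1 \<noteq> 0\<close> by simp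
  have diff: "L (p - q) = L p - L q" for p q using add[of "p - q" q] by simp
  define S where "S = {rpoly n | n. L n = 0}"
  have SH: "S \<subseteq> H" unfolding S_def using rpoly_in_H by blast
  obtain w where w: "w \<in> hclosure H ip S"
    and orth: "\<And>g. g \<in> S \<Longrightarrow> ip g (\<lambda>z. rpoly p0 z - w z) = 0"
    using orthogonal_projection[OF SH kernel_rpoly_subspace[OF add smult, folded S_def] rpoly_in_H[of p0]]
    by blast
  define y where "y = (\<lambda>z. rpoly p0 z - w z)"
  have wH: "w \<in> H" using w unfolding hclosure_def by blast
  have y: "y \<in> H" unfolding y_def using wH by (intro diff_in_H rpoly_in_H)
  have notin: "rpoly p0 \<notin> hclosure H ip S"
    unfolding S_def using Lp0 by (intro rpoly_notin_hclosure_kernel[OF diff bounded]) simp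
  have "nrm y \<noteq> 0"
  proof
    assume "nrm y = 0"
    then have "(\<lambda>z. rpoly p0 z - w z) = (\<lambda>z. 0)" unfolding y_def by (rule hnorm_eq_0[OF y[unfolded y_def]])
    then have "w = rpoly p0" by (simp add: fun_eq_iff)
    with w notin show False by blast
  qed
  have "ip w y = 0" using ip_eq_0_on_hclosure[OF SH y _ w] orth unfolding y_def by blast
  then have p0y: "ip (rpoly p0) y = of_real ((nrm y)\<^sup>2)"
    using ip_add_left[OF y wH y] ip_self_eq_hnorm[OF y] by (simp add: y_def)
  have "ip (rpoly p) y = L p * of_real ((nrm y)\<^sup>2)" for p
  proof -
    have "L (p - smult (L p) p0) = 0" by (simp add: diff smult Lp0)
    then have "rpoly (p - smult (L p) p0) \<in> S" unfolding S_def by blast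
    then have "0 = ip (rpoly (p - smult (L p) p0)) y" using orth unfolding y_def by simp
    also have "rpoly (p - smult (L p) p0) = (\<lambda>z. rpoly p z - L p * rpoly p0 z)"
      by (simp add: restr_def fun_eq_iff)
    finally show ?thesis
      using ip_diff_left[OF rpoly_in_H scale_in_H[OF rpoly_in_H] y] ip_scale_left[OF rpoly_in_H y] p0y
      by simp
  qed
  moreover define c where "c = complex_of_real (1 / (nrm y)\<^sup>2)"
  ultimately have "ip (rpoly p) (\<lambda>z. c * y z) = L p" for p
    using ip_scale_right[OF y rpoly_in_H, where c = c] \<open>nrm y \<noteq> 0\<close> by (simp add: c_def)
  then show ?thesis using scale_in_H[OF y] by blast
qed

section \<open>Closures of polynomial multiples\<close>

lemma poly_mult_bounded: "\<exists>B\<ge>0. \<forall>g\<in>H. nrm (\<lambda>z. poly w z * g z) \<le> B * nrm g"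
proof (induction w)
  case 0
  show ?case using hnorm_zero by (intro exI[of _ 0]) simp
next
  case (pCons a w)
  obtain B where B: "B \<ge> 0" "\<forall>g\<in>H. nrm (\<lambda>z. poly w z * g z) \<le> B * nrm g"
    using pCons.IH by blast
  obtain C where C: "\<forall>g\<in>H. nrm (\<lambda>z. z * g z) \<le> C * nrm g"
    using shift_bounded by blast
  have "nrm (\<lambda>z. poly (pCons a w) z * g z) \<le> (cmod a + max C 0 * B) * nrm g" if g: "g \<in> H" for g
  proof -
    have "nrm (\<lambda>z. z * (poly w z * g z)) \<le> max C 0 * nrm (\<lambda>z. poly w z * g z)"
      using C poly_mult_in_H[OF g] hnorm_nonneg[OF poly_mult_in_H[OF g]]
      by (meson max.cobounded1 mult_right_mono order_trans)
    also have "\<dots> \<le> max C 0 * (B * nrm g)" using B g by (simp add: mult_left_mono)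
    finally have shift: "nrm (\<lambda>z. z * (poly w z * g z)) \<le> max C 0 * (B * nrm g)" .
    have "(\<lambda>z. poly (pCons a w) z * g z) = (\<lambda>z. a * g z + z * (poly w z * g z))"
      by (simp add: algebra_simps)
    then have "nrm (\<lambda>z. poly (pCons a w) z * g z) \<le> nrm (\<lambda>z. a * g z) + nrm (\<lambda>z. z * (poly w z * g z))"
      using hnorm_add_le[OF scale_in_H[OF g] shift_in_H[OF poly_mult_in_H[OF g]]] by simp
    then show ?thesis using shift hnorm_scale[OF g] by (simp add: algebra_simps)
  qed
  then show ?case using B(1) by (intro exI[of _ "cmod a + max C 0 * B"]) auto
qed

definition pmult_closure :: "complex poly \<Rightarrow> (complex \<Rightarrow> complex) set" where
  "pmult_closure p = hclosure H ip (range (\<lambda>q. rpoly (q * p)))"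

lemma mem_pmult_closure:
  "g \<in> pmult_closure p \<longleftrightarrow> g \<in> H \<and> (\<forall>e>0. \<exists>q. nrm (\<lambda>z. g z - rpoly (q * p) z) < e)"
  unfolding pmult_closure_def hclosure_def hdist_def by blast

lemma pmult_closure_subset_H: "pmult_closure p \<subseteq> H"
  using mem_pmult_closure by blast

lemma rpoly_mult_in_pmult_closure: "rpoly (q * p) \<in> pmult_closure p"
  unfolding mem_pmult_closure using rpoly_in_H hnorm_zero by (auto intro!: exI[of _ q])

lemma poly_mult_in_pmult_closure:
  assumes "g \<in> pmult_closure p"
  shows "(\<lambda>z. poly w z * g z) \<in> pmult_closure (w * p)"
proof -
  obtain B where B: "B \<ge> 0" "\<forall>g\<in>H. nrm (\<lambda>z. poly w z * g z) \<le> B * nrm g"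
    using poly_mult_bounded by blast
  have g: "g \<in> H" using assms unfolding mem_pmult_closure by blast
  have "\<exists>q. nrm (\<lambda>z. poly w z * g z - rpoly (q * (w * p)) z) < e" if e: "e > 0" for e
  proof -
    obtain q where q: "nrm (\<lambda>z. g z - rpoly (q * p) z) < e / (B + 1)"
      using assms e B(1) unfolding mem_pmult_closure by (meson add_nonneg_pos divide_pos_pos zero_less_one)
    have "(\<lambda>z. poly w z * g z - rpoly (q * (w * p)) z) = (\<lambda>z. poly w z * (g z - rpoly (q * p) z))"
      by (simp add: restr_def fun_eq_iff algebra_simps)
    then have "nrm (\<lambda>z. poly w z * g z - rpoly (q * (w * p)) z) \<le> B * nrm (\<lambda>z. g z - rpoly (q * p) z)"
      using B(2) diff_in_H[OF g rpoly_in_H] by simp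
    also have "\<dots> \<le> B * (e / (B + 1))" using q B(1) by (intro mult_left_mono) auto
    also have "\<dots> < e" using B(1) e by (simp add: field_simps)
    finally show ?thesis by blast
  qed
  then show ?thesis unfolding mem_pmult_closure using poly_mult_in_H[OF g] by blast
qed

lemma pmult_closure_subset:
  assumes "rpoly a \<in> pmult_closure b"
  shows "pmult_closure a \<subseteq> pmult_closure b"
proof
  fix g assume g: "g \<in> pmult_closure a"
  have gH: "g \<in> H" using g unfolding mem_pmult_closure by blast
  have "\<exists>s. nrm (\<lambda>z. g z - rpoly (s * b) z) < e" if e: "e > 0" for e
  proof -
    obtain q where q: "nrm (\<lambda>z. g z - rpoly (q * a) z) < e / 2"
      using g e unfolding mem_pmult_closure by (meson half_gt_zero)
    have "rpoly (q * a) \<in> pmult_closure (q * b)"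
      using poly_mult_in_pmult_closure[OF assms, of q] by (simp add: rpoly_mult)
    then obtain s where s: "nrm (\<lambda>z. rpoly (q * a) z - rpoly (s * (q * b)) z) < e / 2"
      using e unfolding mem_pmult_closure by (meson half_gt_zero)
    have "nrm (\<lambda>z. g z - rpoly (s * q * b) z)
        \<le> nrm (\<lambda>z. g z - rpoly (q * a) z) + nrm (\<lambda>z. rpoly (q * a) z - rpoly (s * (q * b)) z)"
      using hnorm_triangle[OF gH rpoly_in_H rpoly_in_H] by (simp add: mult.assoc)
    also have "\<dots> < e" using q s by simp
    finally show ?thesis by blast
  qed
  then show "g \<in> pmult_closure b" unfolding mem_pmult_closure using gH by blast
qed

lemma pmult_closure_smult: "c \<noteq> 0 \<Longrightarrow> pmult_closure (smult c p) = pmult_closure p"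
  using pmult_closure_subset rpoly_mult_in_pmult_closure[of "[:c:]" p]
    rpoly_mult_in_pmult_closure[of "[:inverse c:]" "smult c p"]
  by (simp add: subset_antisym)

lemma pmult_closure_one: "pmult_closure 1 = H"
  using polys_dense by (auto simp: mem_pmult_closure)

lemma cyc_rpoly: "cyc H ip (rpoly f) = pmult_closure f"
  unfolding cyc_def pmult_closure_def fspan_monomial_mult rpoly_mult
  using full_SetCompr_eq[of "\<lambda>q. rpoly (q * f)"] by simp

section \<open>Reproducible points and their kernels\<close>

lemma reproducible_Suc_imp:
  assumes "reproducible Om ip (Suc j) b" shows "reproducible Om ip j b"
proof -
  obtain K where K: "\<And>p. cmod (poly ((pderiv ^^ Suc j) p) b) \<le> K * nrm (rpoly p)"
    using assms unfolding reproducible_def by blast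
  obtain B where B: "\<forall>g\<in>H. nrm (\<lambda>z. poly [:-b,1:] z * g z) \<le> B * nrm g"
    using poly_mult_bounded by blast
  have "cmod (poly ((pderiv ^^ j) p) b) \<le> max K 0 * B * nrm (rpoly p)" for p
  proof -
    have "cmod (poly ((pderiv ^^ j) p) b) \<le> real (Suc j) * cmod (poly ((pderiv ^^ j) p) b)"
      by (simp add: mult_le_cancel_right1)
    also have "\<dots> = cmod (poly ((pderiv ^^ Suc j) ([:-b,1:] * p)) b)"
      by (simp only: poly_higher_pderiv_linear_mult norm_mult norm_of_nat)
    also have "\<dots> \<le> max K 0 * nrm (rpoly ([:-b,1:] * p))"
      using K[of "[:-b,1:] * p"] hnorm_nonneg[OF rpoly_in_H] by (meson max.cobounded1 mult_right_mono order_trans)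
    also have "\<dots> \<le> max K 0 * (B * nrm (rpoly p))"
      using B rpoly_in_H[of p] unfolding rpoly_mult[symmetric] by (intro mult_left_mono) auto
    finally show ?thesis by simp
  qed
  then show ?thesis unfolding reproducible_def by blast
qed

lemma reproducible_mono: "reproducible Om ip m b \<Longrightarrow> j \<le> m \<Longrightarrow> reproducible Om ip j b"
  by (induction m) (auto simp: le_Suc_eq dest: reproducible_Suc_imp)

lemma kern_represents:
  assumes "reproducible Om ip l b"
  shows "kern Om H ip l b \<in> H" "ip (rpoly p) (kern Om H ip l b) = poly ((pderiv ^^ l) p) b"
proof -
  obtain K where "\<forall>p. cmod (poly ((pderiv ^^ l) p) b) \<le> K * nrm (rpoly p)"
    using assms unfolding reproducible_def by blast
  then have "\<exists>k\<in>H. \<forall>p. ip (rpoly p) k = poly ((pderiv ^^ l) p) b"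
    by (intro bounded_functional_representable[where K = K]) (simp_all add: higher_pderiv_add higher_pderiv_smult)
  then have "\<exists>k. k \<in> H \<and> (\<forall>p. ip (rpoly p) k = poly ((pderiv ^^ l) p) b)" by blast
  from someI_ex[OF this] show "kern Om H ip l b \<in> H" "ip (rpoly p) (kern Om H ip l b) = poly ((pderiv ^^ l) p) b"
    unfolding kern_def by auto
qed

lemma taylor_tail_bounded:
  assumes "\<And>i. i < c \<Longrightarrow> reproducible Om ip i b"
  shows "\<exists>D. \<forall>p. \<exists>s t. p = t + [:-b,1:] ^ c * s \<and> (pderiv ^^ c) t = 0 \<and>
                   nrm (rpoly ([:-b,1:] ^ c * s)) \<le> D * nrm (rpoly p)"
  using assms
proof (induction c)
  case 0
  have "\<exists>s t. p = t + [:-b,1:] ^ 0 * s \<and> (pderiv ^^ 0) t = 0 \<and>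
          nrm (rpoly ([:-b,1:] ^ 0 * s)) \<le> 1 * nrm (rpoly p)" for p
    by (rule exI[of _ p], rule exI[of _ 0]) simp
  then show ?case by blast
next
  case (Suc c)
  have "\<And>i. i < c \<Longrightarrow> reproducible Om ip i b" using Suc.prems by simp
  then obtain D where D: "\<forall>p. \<exists>s t. p = t + [:-b,1:] ^ c * s \<and> (pderiv ^^ c) t = 0 \<and>
                       nrm (rpoly ([:-b,1:] ^ c * s)) \<le> D * nrm (rpoly p)"
    using Suc.IH by blast
  obtain K where K: "\<forall>p. cmod (poly ((pderiv ^^ c) p) b) \<le> K * nrm (rpoly p)"
    using Suc.prems[of c] unfolding reproducible_def by auto
  define D' where "D' = D + K / fact c * nrm (rpoly ([:-b,1:] ^ c))"
  have "\<exists>s t. p = t + [:-b,1:] ^ Suc c * s \<and> (pderiv ^^ Suc c) t = 0 \<and>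
            nrm (rpoly ([:-b,1:] ^ Suc c * s)) \<le> D' * nrm (rpoly p)" for p
  proof -
    obtain s t where st: "p = t + [:-b,1:] ^ c * s" "(pderiv ^^ c) t = 0"
      "nrm (rpoly ([:-b,1:] ^ c * s)) \<le> D * nrm (rpoly p)" using D by blast
    define r where "r = synthetic_div s b"
    have tail: "[:-b,1:] ^ Suc c * r = [:-b,1:] ^ c * s - smult (poly s b) ([:-b,1:] ^ c)"
      unfolding r_def by (rule linear_power_mult_synthetic_div)
    have "fact c * cmod (poly s b) \<le> K * nrm (rpoly p)"
      using K[rule_format, of p] higher_pderiv_taylor[OF st(2)] st(1) by (simp add: norm_mult)
    then have "cmod (poly s b) * nrm (rpoly ([:-b,1:] ^ c))
             \<le> K / fact c * nrm (rpoly p) * nrm (rpoly ([:-b,1:] ^ c))"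
      using hnorm_nonneg[OF rpoly_in_H] by (intro mult_right_mono) (simp_all add: field_simps)
    moreover have "nrm (rpoly ([:-b,1:] ^ Suc c * r))
        \<le> nrm (rpoly ([:-b,1:] ^ c * s)) + cmod (poly s b) * nrm (rpoly ([:-b,1:] ^ c))"
      using hnorm_diff_le[OF rpoly_in_H rpoly_in_H, of "[:-b,1:] ^ c * s" "smult (poly s b) ([:-b,1:] ^ c)"]
      unfolding tail rpoly_diff hnorm_rpoly_smult .
    moreover have "D' * nrm (rpoly p) = D * nrm (rpoly p) + K / fact c * nrm (rpoly p) * nrm (rpoly ([:-b,1:] ^ c))"
      unfolding D'_def by (simp add: algebra_simps)
    ultimately have "nrm (rpoly ([:-b,1:] ^ Suc c * r)) \<le> D' * nrm (rpoly p)"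
      using st(3) by linarith
    moreover have "p = (t + smult (poly s b) ([:-b,1:] ^ c)) + [:-b,1:] ^ Suc c * r"
      unfolding tail st(1) by simp
    ultimately show ?thesis using higher_pderiv_taylor_Suc[OF st(2)] by blast
  qed
  then show ?case by blast
qed

(* c = ro b + 1 for a reproducible point b, and c = 0 otherwise. *)
definition first_nonreproducible :: "complex \<Rightarrow> nat \<Rightarrow> bool" where
  "first_nonreproducible b c \<longleftrightarrow> (\<forall>i<c. reproducible Om ip i b) \<and> \<not> reproducible Om ip c b"

(* At positive distance from [(z - b)^(c+1)], (z - b)^c would make the c-th derivative at b
   bounded by the Taylor tail. *)
lemma linear_power_in_pmult_closure:
  assumes "first_nonreproducible b c"
  shows "rpoly ([:-b,1:] ^ c) \<in> pmult_closure ([:-b,1:] ^ Suc c)"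
proof (rule ccontr)
  assume "rpoly ([:-b,1:] ^ c) \<notin> pmult_closure ([:-b,1:] ^ Suc c)"
  then obtain e where e: "e > 0" "\<And>q. e \<le> nrm (\<lambda>z. rpoly ([:-b,1:] ^ c) z - rpoly (q * [:-b,1:] ^ Suc c) z)"
    unfolding mem_pmult_closure using rpoly_in_H by (auto simp: not_less)
  obtain D where D: "\<forall>p. \<exists>s t. p = t + [:-b,1:] ^ c * s \<and> (pderiv ^^ c) t = 0 \<and>
                       nrm (rpoly ([:-b,1:] ^ c * s)) \<le> D * nrm (rpoly p)"
    using taylor_tail_bounded assms unfolding first_nonreproducible_def by blast
  have "cmod (poly ((pderiv ^^ c) p) b) \<le> fact c * D / e * nrm (rpoly p)" for p
  proof -
    obtain s t where st: "p = t + [:-b,1:] ^ c * s" "(pderiv ^^ c) t = 0"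
      "nrm (rpoly ([:-b,1:] ^ c * s)) \<le> D * nrm (rpoly p)" using D by blast
    have "cmod (poly s b) * e \<le> nrm (rpoly ([:-b,1:] ^ c * s))"
    proof (cases "poly s b = 0")
      case False
      define r where "r = synthetic_div s b"
      have key: "X ^ c - smult (-1 / a) r * X ^ Suc c = smult (1 / a) (X ^ c * s)"
        if "s = [:a:] + X * r" "a \<noteq> 0" for X :: "complex poly" and a r
        using that by (simp add: algebra_simps smult_add_right)
      have "[:-b,1:] ^ c - smult (-1 / poly s b) r * [:-b,1:] ^ Suc c
          = smult (1 / poly s b) ([:-b,1:] ^ c * s)"
        unfolding r_def by (rule key[OF linear_synthetic_div False])
      then have "e \<le> nrm (\<lambda>z. (1 / poly s b) * rpoly ([:-b,1:] ^ c * s) z)"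
        using e(2)[of "smult (-1 / poly s b) r"] by (simp only: rpoly_diff rpoly_smult)
      then have "e \<le> cmod (1 / poly s b) * nrm (rpoly ([:-b,1:] ^ c * s))"
        by (simp only: hnorm_scale[OF rpoly_in_H])
      then show ?thesis using False by (simp add: norm_divide field_simps)
    qed (simp add: hnorm_nonneg rpoly_in_H)
    moreover have "poly ((pderiv ^^ c) p) b = fact c * poly s b"
      unfolding st(1) by (rule higher_pderiv_taylor[OF st(2)])
    ultimately show ?thesis using st(3) e(1) by (simp add: norm_mult field_simps)
  qed
  then have "reproducible Om ip c b" unfolding reproducible_def by blast
  then show False using assms unfolding first_nonreproducible_def by blast
qed

lemma linear_power_in_pmult_closure_above:
  assumes "first_nonreproducible b c" "c \<le> k"
  shows "rpoly ([:-b,1:] ^ k) \<in> pmult_closure ([:-b,1:] ^ Suc k)"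
proof -
  have "k = (k - c) + c" "Suc k = (k - c) + Suc c" using assms(2) by simp_all
  then show ?thesis
    using poly_mult_in_pmult_closure[OF linear_power_in_pmult_closure[OF assms(1)], of "[:-b,1:] ^ (k - c)"]
    by (metis power_add rpoly_mult)
qed

lemma roots_poly_in_pmult_closure:
  assumes "\<And>b. count A b < count (A + D) b \<Longrightarrow> first_nonreproducible b (count A b)"
  shows "rpoly (roots_poly A) \<in> pmult_closure (roots_poly (A + D))"
  using assms
proof (induction D)
  case empty
  show ?case using rpoly_mult_in_pmult_closure[of 1] by simp
next
  case (add b D)
  have IH: "rpoly (roots_poly A) \<in> pmult_closure (roots_poly (A + D))"
    using add.prems by (intro add.IH) (auto simp: less_Suc_eq)
  have "first_nonreproducible b (count A b)" using add.prems[of b] by simp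
  then have "rpoly ([:-b,1:] ^ count (A + D) b) \<in> pmult_closure ([:-b,1:] ^ Suc (count (A + D) b))"
    by (rule linear_power_in_pmult_closure_above) simp
  from poly_mult_in_pmult_closure[OF this, of "roots_poly {#x \<in># A + D. x \<noteq> b#}"]
  have "rpoly (roots_poly {#x \<in># A + D. x \<noteq> b#} * [:-b,1:] ^ count (A + D) b)
      \<in> pmult_closure (roots_poly {#x \<in># A + D. x \<noteq> b#} * [:-b,1:] ^ Suc (count (A + D) b))"
    by (simp only: rpoly_mult)
  moreover have "roots_poly {#x \<in># A + D. x \<noteq> b#} * [:-b,1:] ^ count (A + D) b = roots_poly (A + D)"
    using roots_poly_split[of "A + D" b] by (simp only: mult.commute)
  moreover have "roots_poly {#x \<in># A + D. x \<noteq> b#} * [:-b,1:] ^ Suc (count (A + D) b)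
      = roots_poly (A + add_mset b D)"
    using roots_poly_split[of "A + D" b]
    by (simp only: union_mset_add_mset_right roots_poly_add_mset power_Suc mult_ac)
  ultimately have "rpoly (roots_poly (A + D)) \<in> pmult_closure (roots_poly (A + add_mset b D))"
    by simp
  then show ?case using IH pmult_closure_subset by blast
qed

definition kernel_set :: "complex multiset \<Rightarrow> (complex \<Rightarrow> complex) set" where
  "kernel_set M = {kern Om H ip l b | b l. b \<in># M \<and> l < count M b}"

lemma kernel_set_subset_H:
  "(\<And>b l. l < count M b \<Longrightarrow> reproducible Om ip l b) \<Longrightarrow> kernel_set M \<subseteq> H"
  unfolding kernel_set_def using kern_represents(1) by blast

lemma pmult_closure_subset_perp:
  assumes "\<And>b l. l < count M b \<Longrightarrow> reproducible Om ip l b \<and> l < order b f"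
  shows "pmult_closure f \<subseteq> perp H ip (kernel_set M)"
proof
  fix g assume g: "g \<in> pmult_closure f"
  have "ip g k = 0" if k: "k \<in> kernel_set M" for k
  proof -
    obtain b l where kb: "k = kern Om H ip l b" and l: "l < count M b"
      using k by (auto simp: kernel_set_def)
    have rep: "reproducible Om ip l b" and ord: "l < order b f" using assms[OF l] by auto
    have kH: "k \<in> H" unfolding kb by (rule kern_represents(1)[OF rep])
    have "ip h k = 0" if h: "h \<in> range (\<lambda>q. rpoly (q * f))" for h
    proof -
      obtain q where "h = rpoly (q * f)" using h by blast
      then show ?thesis
        using kern_represents(2)[OF rep, of "q * f"] higher_pderiv_mult_vanishes[OF ord, of q]
        unfolding kb by simp
    qed
    moreover have "range (\<lambda>q. rpoly (q * f)) \<subseteq> H" using rpoly_in_H by blast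
    ultimately show ?thesis
      using ip_eq_0_on_hclosure[OF _ kH _ g[unfolded pmult_closure_def]] by blast
  qed
  moreover have "g \<in> H" using g pmult_closure_subset_H by blast
  ultimately show "g \<in> perp H ip (kernel_set M)" unfolding perp_def by blast
qed

lemma pmult_closure_linear_mult_if_perp:
  assumes rep: "reproducible Om ip m b" and a: "a = [:-b,1:] ^ m * u" and u: "poly u b \<noteq> 0"
    and g: "g \<in> pmult_closure a" and perp: "ip g (kern Om H ip m b) = 0"
  shows "g \<in> pmult_closure ([:-b,1:] * a)"
proof -
  define k where "k = kern Om H ip m b"
  have k: "k \<in> H" "\<And>p. ip (rpoly p) k = poly ((pderiv ^^ m) p) b"
    unfolding k_def using kern_represents[OF rep] by auto
  have gH: "g \<in> H" using g pmult_closure_subset_H by blast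
  define c where "c = fact m * cmod (poly u b)"
  have c: "c > 0" unfolding c_def using u by simp
  define A where "A = nrm (rpoly a)"
  have A: "A \<ge> 0" "nrm k \<ge> 0" unfolding A_def using hnorm_nonneg rpoly_in_H k(1) by auto
  have "\<exists>r. nrm (\<lambda>z. g z - rpoly (r * ([:-b,1:] * a)) z) < e" if e: "e > 0" for e
  proof -
    define e' where "e' = e / (1 + nrm k * A / c)"
    have den: "1 + nrm k * A / c > 0" using A c by (simp add: add_pos_nonneg)
    then obtain q where q: "nrm (\<lambda>z. g z - rpoly (q * a) z) < e'"
      using g e unfolding mem_pmult_closure e'_def by (meson divide_pos_pos)
    \<comment> \<open>The derivative of order m of q a at b is read off through the kernel, where g contributes nothing.\<close>
    have "c * cmod (poly q b) = cmod (ip (\<lambda>z. rpoly (q * a) z - g z) k)"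
      using ip_diff_left[OF rpoly_in_H gH k(1)] k(2)[of "q * a"] perp
      unfolding a c_def k_def
      by (simp add: mult.left_commute[of q] higher_pderiv_linear_power_mult norm_mult)
    also have "\<dots> \<le> nrm (\<lambda>z. g z - rpoly (q * a) z) * nrm k"
      using Cauchy_Schwarz[OF diff_in_H[OF rpoly_in_H gH] k(1)] hnorm_diff_commute[OF gH rpoly_in_H]
      by simp
    also have "\<dots> \<le> e' * nrm k" using q A by (intro mult_right_mono) auto
    finally have qb: "cmod (poly q b) \<le> e' * nrm k / c" using c by (simp add: field_simps)
    define r where "r = synthetic_div q b"
    have "(\<lambda>z. g z - rpoly (r * ([:-b,1:] * a)) z) = (\<lambda>z. (g z - rpoly (q * a) z) + poly q b * rpoly a z)"
      using linear_synthetic_div[of q b] unfolding r_def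
      by (subst (2) linear_synthetic_div[of q b]) (simp add: restr_def fun_eq_iff algebra_simps)
    then have "nrm (\<lambda>z. g z - rpoly (r * ([:-b,1:] * a)) z) \<le> nrm (\<lambda>z. g z - rpoly (q * a) z) + cmod (poly q b) * A"
      using hnorm_add_le[OF diff_in_H[OF gH rpoly_in_H] scale_in_H[OF rpoly_in_H]] hnorm_scale[OF rpoly_in_H]
      unfolding A_def by simp
    also have "\<dots> < e' + e' * nrm k / c * A"
      using q qb A by (intro add_less_le_mono mult_right_mono) auto
    also have "\<dots> = e' * (1 + nrm k * A / c)" by (simp add: algebra_simps)
    also have "\<dots> = e" unfolding e'_def using den by simp
    finally show ?thesis by blast
  qed
  then show ?thesis unfolding mem_pmult_closure using gH by blast
qed

lemma perp_subset_pmult_closure: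
  assumes "\<And>b l. l < count M b \<Longrightarrow> reproducible Om ip l b"
  shows "perp H ip (kernel_set M) \<subseteq> pmult_closure (roots_poly M)"
  using assms
proof (induction M)
  case empty
  show ?case by (simp add: kernel_set_def perp_def pmult_closure_one)
next
  case (add b M)
  have IH: "perp H ip (kernel_set M) \<subseteq> pmult_closure (roots_poly M)"
    using add.prems by (intro add.IH) (metis count_add_mset less_SucI)
  have "kernel_set M \<subseteq> kernel_set (add_mset b M)"
    unfolding kernel_set_def by (auto simp: less_Suc_eq)
  then have sub: "perp H ip (kernel_set (add_mset b M)) \<subseteq> perp H ip (kernel_set M)"
    unfolding perp_def by blast
  have "kern Om H ip (count M b) b \<in> kernel_set (add_mset b M)"
    unfolding kernel_set_def by auto
  moreover have "reproducible Om ip (count M b) b" using add.prems[of "count M b" b] by simp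
  moreover have "poly (roots_poly {#x \<in># M. x \<noteq> b#}) b \<noteq> 0"
    by (simp add: poly_roots_poly_eq_0_iff)
  ultimately show ?case
    using pmult_closure_linear_mult_if_perp[OF _ roots_poly_split] IH sub
    by (fastforce simp: perp_def roots_poly_add_mset)
qed

section \<open>Multiplicities of reproducible zeros\<close>

(* The conjunct is needed: ro b is a supremum over an empty set, hence 0, when b is not reproducible. *)
lemma reproducible_iff_less_ro:
  "reproducible Om ip l b \<longleftrightarrow> reproducible Om ip 0 b \<and> enat l < ro Om ip b + 1"
proof
  assume rep: "reproducible Om ip l b"
  then have "enat l \<le> ro Om ip b" unfolding ro_def by (intro SUP_upper) auto
  then have "enat l < ro Om ip b + 1" by (cases "ro Om ip b") (auto simp: one_enat_def)
  then show "reproducible Om ip 0 b \<and> enat l < ro Om ip b + 1"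
    using reproducible_mono[OF rep] by simp
next
  assume "reproducible Om ip 0 b \<and> enat l < ro Om ip b + 1"
  then have rep0: "reproducible Om ip 0 b" and lt: "enat l < ro Om ip b + 1" by auto
  show "reproducible Om ip l b"
  proof (rule ccontr)
    assume nrep: "\<not> reproducible Om ip l b"
    then have "l \<ge> 1" using rep0 by (cases l) auto
    have "enat m \<le> enat (l - 1)" if "reproducible Om ip m b" for m
    proof -
      have "m < l" using nrep reproducible_mono[OF that] by (meson not_less)
      then show ?thesis by simp
    qed
    then have "ro Om ip b \<le> enat (l - 1)" unfolding ro_def by (intro SUP_least) auto
    then have "ro Om ip b + 1 \<le> enat (l - 1) + 1" by (rule add_right_mono)
    also have "enat (l - 1) + 1 = enat l" using \<open>l \<ge> 1\<close> by (simp add: one_enat_def)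
    finally show False using lt by simp
  qed
qed

lemma enat_rmult:
  assumes "reproducible Om ip 0 b" "1 \<le> order b f"
  shows "enat (rmult Om ip f b) = min (enat (order b f)) (ro Om ip b + 1)"
proof -
  obtain n where "min (enat (order b f)) (ro Om ip b + 1) = enat n"
    using enat_ile[OF min.cobounded1] by blast
  then show ?thesis using assms unfolding rmult_def by simp
qed

lemma reproducible_below_rmult: "l < rmult Om ip f b \<Longrightarrow> reproducible Om ip l b"
proof -
  assume l: "l < rmult Om ip f b"
  then have cond: "reproducible Om ip 0 b" "1 \<le> order b f" unfolding rmult_def by (auto split: if_splits)
  have "enat l < enat (rmult Om ip f b)" using l by simp
  also have "\<dots> = min (enat (order b f)) (ro Om ip b + 1)" by (rule enat_rmult[OF cond])
  finally have "enat l < ro Om ip b + 1" by simp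
  then show ?thesis using cond(1) reproducible_iff_less_ro by blast
qed

lemma rmult_le_order: "rmult Om ip f b \<le> order b f"
proof (cases "reproducible Om ip 0 b \<and> 1 \<le> order b f")
  case True
  then have "enat (rmult Om ip f b) \<le> enat (order b f)" using enat_rmult[of b f] by simp
  then show ?thesis by simp
qed (auto simp: rmult_def)

lemma first_nonreproducible_rmult:
  assumes "rmult Om ip f b < order b f"
  shows "first_nonreproducible b (rmult Om ip f b)"
proof (cases "reproducible Om ip 0 b \<and> 1 \<le> order b f")
  case True
  then have "enat (rmult Om ip f b) = min (enat (order b f)) (ro Om ip b + 1)"
    by (intro enat_rmult) auto
  with assms have "enat (rmult Om ip f b) = ro Om ip b + 1"
    by (cases "enat (order b f) \<le> ro Om ip b + 1") (simp_all add: min_def)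
  then have "\<not> enat (rmult Om ip f b) < ro Om ip b + 1" by simp
  then have "\<not> reproducible Om ip (rmult Om ip f b) b" using reproducible_iff_less_ro by blast
  then show ?thesis
    unfolding first_nonreproducible_def using reproducible_below_rmult by blast
next
  case False
  then have "rmult Om ip f b = 0" unfolding rmult_def by auto
  moreover from this have "\<not> reproducible Om ip 0 b" using False assms by simp
  ultimately show ?thesis unfolding first_nonreproducible_def by simp
qed

lemma count_Rz: "f \<noteq> 0 \<Longrightarrow> count (Rz Om ip f) b = rmult Om ip f b"
proof -
  assume f: "f \<noteq> 0"
  have "count (Rz Om ip f) b = (\<Sum>x\<in>{x. poly f x = 0}. if x = b then rmult Om ip f x else 0)"
    unfolding Rz_def count_sum by (intro sum.cong) auto
  also have "\<dots> = (if poly f b = 0 then rmult Om ip f b else 0)"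
    using poly_roots_finite[OF f] by (simp add: sum.delta)
  also have "\<dots> = rmult Om ip f b"
  proof (cases "poly f b = 0")
    case False
    then have "order b f = 0" by (simp add: order_root)
    then show ?thesis using False by (simp add: rmult_def)
  qed simp
  finally show ?thesis .
qed

lemma pmult_closure_eq_roots_poly_Rz_and_perp:
  assumes "f \<noteq> 0"
  shows "pmult_closure f = pmult_closure (roots_poly (Rz Om ip f))"
    and "pmult_closure f = perp H ip (kernel_set (Rz Om ip f))"
proof -
  define A where "A = Rz Om ip f"
  have count_A: "count A b = rmult Om ip f b" for b
    unfolding A_def using count_Rz[OF assms] .
  have rep: "reproducible Om ip l b \<and> l < order b f" if "l < count A b" for b l
    using that reproducible_below_rmult rmult_le_order unfolding count_A by (metis order_less_le_trans)
  have "A \<subseteq># proots f" unfolding subseteq_mset_def count_A using assms rmult_le_order by simp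
  then have A_plus: "A + (proots f - A) = proots f" by (rule subset_mset.add_diff_inverse)
  have "rpoly (roots_poly A) \<in> pmult_closure (roots_poly (A + (proots f - A)))"
    by (rule roots_poly_in_pmult_closure)
      (use assms first_nonreproducible_rmult in \<open>simp add: A_plus count_A\<close>)
  moreover have "pmult_closure (roots_poly (proots f)) = pmult_closure f"
    using pmult_closure_smult[of "lead_coeff f" "roots_poly (proots f)"] assms
    by (simp add: complex_poly_decompose_multiset)
  ultimately have "pmult_closure (roots_poly A) \<subseteq> pmult_closure f"
    using pmult_closure_subset A_plus by simp
  moreover have "pmult_closure f \<subseteq> perp H ip (kernel_set A)"
    using rep by (rule pmult_closure_subset_perp)
  moreover have "perp H ip (kernel_set A) \<subseteq> pmult_closure (roots_poly A)"
    using rep by (intro perp_subset_pmult_closure) blast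
  ultimately show "pmult_closure f = pmult_closure (roots_poly (Rz Om ip f))"
    and "pmult_closure f = perp H ip (kernel_set (Rz Om ip f))"
    unfolding A_def by blast+
qed

end

theorem mainTheorem7:
  fixes \<Omega> :: "complex set" and H :: "(complex \<Rightarrow> complex) set"
    and ip :: "(complex \<Rightarrow> complex) \<Rightarrow> (complex \<Rightarrow> complex) \<Rightarrow> complex"
    and f :: "complex poly"
  assumes "AHS \<Omega> H ip" and "f \<noteq> 0"
  shows "cyc H ip (restr \<Omega> (poly f))
           = cyc H ip (restr \<Omega> (poly (\<Prod>\<beta>\<in>#Rz \<Omega> ip f. [:-\<beta>, 1:])))
       \<and> cyc H ip (restr \<Omega> (poly f))
           = perp H ip (fspan {kern \<Omega> H ip l \<beta> | \<beta> l. \<beta> \<in># Rz \<Omega> ip f \<and> l < count (Rz \<Omega> ip f) \<beta>})"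
proof -
  interpret analytic_hilbert_space \<Omega> H ip by (rule analytic_hilbert_space.intro) (rule assms(1))
  have "kernel_set (Rz \<Omega> ip f) \<subseteq> H"
    using reproducible_below_rmult count_Rz[OF assms(2)] by (intro kernel_set_subset_H) simp
  then show ?thesis
    using pmult_closure_eq_roots_poly_Rz_and_perp[OF assms(2)] perp_fspan
    unfolding cyc_rpoly kernel_set_def by simp
qed

end
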